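(* Let $G$ be a finite group, $\alpha\in\mathbb{Z}_{\ge0}$, and let $(A,M)$ be an irreducible NIM-rep of the near-group fusion ring $K(G,\alpha)$. If $m,m'\in M$ lie in the same $G$-orbit (i.e. $m'=g\vartriangleright m$ for some $g\in G$), then $X\vartriangleright m=X\vartriangleright m'$.
   Context: The near-group fusion ring $K(G,\alpha)$ is the free $\mathbb{Z}$-module with basis $G\cup\{X\}$, with multiplication given by the group law on $G$, $gX=Xg=X$ for $g\in G$, and $X^2=\sum_{g\in G}g+\alpha X$; the involution is $g^*=g^{-1}$, $X^*=X$. A NIM-rep of a fusion ring $(R,B)$ is a nonzero left $R$-module $A$ which is a free $\mathbb{Z}$-module with a fixed basis $M$, such that each $b\vartriangleright m$ ($b\in B$, $m\in M$) is a non-negative integer combination of elements of $M$, and such that for the symmetric bilinear form with $(m,m')=\delta_{m,m'}$ on $M$, $(b\vartriangleright m,m')=(m,b^*\vartriangleright m')$. For NIM-reps of $K(G,\alpha)$ each $g\in G$ permutes $M$, giving a $G$-action on $M$ whose orbits partition $M$. A NIM-rep is irreducible if no proper nonempty subset of $M$ spans an $R$-submodule. *)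

theory Defs
  imports "HOL-Algebra.Group"
begin

datatype 'g ng_basis = Grp 'g | Xel

definition ng_basis_set :: "('g, 'b) monoid_scheme \<Rightarrow> 'g ng_basis set" where
  "ng_basis_set G = Grp ` carrier G \<union> {Xel}"

text \<open>Structure constants N_{b1 b2}^c of K(G,alpha): b1 b2 = sum_c (ng_mult G alpha b1 b2 c) c.\<close>
fun ng_mult :: "('g, 'b) monoid_scheme \<Rightarrow> nat \<Rightarrow> 'g ng_basis \<Rightarrow> 'g ng_basis \<Rightarrow> 'g ng_basis \<Rightarrow> nat" where
  "ng_mult G \<alpha> (Grp g) (Grp h) c = (if c = Grp (g \<otimes>\<^bsub>G\<^esub> h) then 1 else 0)"
| "ng_mult G \<alpha> (Grp g) Xel c = (if c = Xel then 1 else 0)"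
| "ng_mult G \<alpha> Xel (Grp g) c = (if c = Xel then 1 else 0)"
| "ng_mult G \<alpha> Xel Xel c = (if c = Xel then \<alpha> else 1)"

fun ng_dual :: "('g, 'b) monoid_scheme \<Rightarrow> 'g ng_basis \<Rightarrow> 'g ng_basis" where
  "ng_dual G (Grp g) = Grp (inv\<^bsub>G\<^esub> g)"
| "ng_dual G Xel = Xel"

text \<open>A NIM-rep with (finite) basis M: act b m m' is the (non-negative integer) coefficient
  of m' in b \<rhd> m.\<close>
definition ng_nimrep ::
  "('g, 'b) monoid_scheme \<Rightarrow> nat \<Rightarrow> 'm set \<Rightarrow> ('g ng_basis \<Rightarrow> 'm \<Rightarrow> 'm \<Rightarrow> nat) \<Rightarrow> bool" where
  "ng_nimrep G \<alpha> M act \<longleftrightarrow>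
     finite M \<and> M \<noteq> {} \<and>
     (\<forall>m\<in>M. \<forall>m'\<in>M. act (Grp \<one>\<^bsub>G\<^esub>) m m' = (if m = m' then 1 else 0)) \<and>
     (\<forall>b1\<in>ng_basis_set G. \<forall>b2\<in>ng_basis_set G. \<forall>m\<in>M. \<forall>m''\<in>M.
        (\<Sum>m'\<in>M. act b2 m m' * act b1 m' m'') =
        (\<Sum>c\<in>ng_basis_set G. ng_mult G \<alpha> b1 b2 c * act c m m'')) \<and>
     (\<forall>b\<in>ng_basis_set G. \<forall>m\<in>M. \<forall>m'\<in>M. act b m m' = act (ng_dual G b) m' m)"

definition ng_nimrep_irreducible ::
  "('g, 'b) monoid_scheme \<Rightarrow> 'm set \<Rightarrow> ('g ng_basis \<Rightarrow> 'm \<Rightarrow> 'm \<Rightarrow> nat) \<Rightarrow> bool" where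
  "ng_nimrep_irreducible G M act \<longleftrightarrow>
     (\<forall>S. S \<subseteq> M \<and> S \<noteq> {} \<and> S \<noteq> M \<longrightarrow>
        (\<exists>b\<in>ng_basis_set G. \<exists>m\<in>S. \<exists>m'\<in>M - S. act b m m' \<noteq> 0))"

end

theory Submission
  imports Defs
begin

text \<open>In K(G,\<alpha>) we have X g = X, so module associativity gives
  X \<rhd> m = (X g) \<rhd> m = X \<rhd> (g \<rhd> m) = X \<rhd> m'.\<close>

lemma ng_basis_set_finite: "finite (carrier G) \<Longrightarrow> finite (ng_basis_set G)"
  unfolding ng_basis_set_def by simp

lemma Xel_in_ng_basis_set: "Xel \<in> ng_basis_set G"
  unfolding ng_basis_set_def by simp

lemma Grp_in_ng_basis_set: "g \<in> carrier G \<Longrightarrow> Grp g \<in> ng_basis_set G"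
  unfolding ng_basis_set_def by simp

lemma sum_ng_mult_Xel_Grp:
  assumes "finite (carrier G)"
  shows "(\<Sum>c\<in>ng_basis_set G. ng_mult G \<alpha> Xel (Grp g) c * f c) = f Xel"
proof -
  have "(\<Sum>c\<in>ng_basis_set G. ng_mult G \<alpha> Xel (Grp g) c * f c)
      = (\<Sum>c\<in>ng_basis_set G. if c = Xel then f c else 0)"
    by (intro sum.cong) auto
  also have "\<dots> = f Xel"
    using ng_basis_set_finite[OF assms] Xel_in_ng_basis_set[of G] by (simp add: sum.delta)
  finally show ?thesis .
qed

lemma ng_nimrep_assoc:
  assumes "ng_nimrep G \<alpha> M act"
    and "b1 \<in> ng_basis_set G" and "b2 \<in> ng_basis_set G" and "m \<in> M" and "n \<in> M"
  shows "(\<Sum>k\<in>M. act b2 m k * act b1 k n) =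
         (\<Sum>c\<in>ng_basis_set G. ng_mult G \<alpha> b1 b2 c * act c m n)"
  using assms unfolding ng_nimrep_def by blast

lemma ng_nimrep_act_Xel_eq_sum_Grp:
  assumes "finite (carrier G)" and "ng_nimrep G \<alpha> M act"
    and "g \<in> carrier G" and "m \<in> M" and "n \<in> M"
  shows "act Xel m n = (\<Sum>k\<in>M. act (Grp g) m k * act Xel k n)"
  using ng_nimrep_assoc[OF assms(2) Xel_in_ng_basis_set Grp_in_ng_basis_set[OF assms(3)]
      assms(4,5)]
    sum_ng_mult_Xel_Grp[OF assms(1)]
  by simp

lemma sum_unit_row:
  fixes f :: "'m \<Rightarrow> 'a::semiring_1"
  assumes "finite M" and "m' \<in> M" and "\<forall>k\<in>M. a k = (if k = m' then 1 else 0)"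
  shows "(\<Sum>k\<in>M. a k * f k) = f m'"
proof -
  have "(\<Sum>k\<in>M. a k * f k) = (\<Sum>k\<in>M. if k = m' then f k else 0)"
    using assms(3) by (intro sum.cong) auto
  also have "\<dots> = f m'"
    using assms(1,2) by (simp add: sum.delta)
  finally show ?thesis .
qed

theorem proposition3p9:
  fixes G :: "('g, 'b) monoid_scheme" and \<alpha> :: nat
    and M :: "'m set" and act :: "'g ng_basis \<Rightarrow> 'm \<Rightarrow> 'm \<Rightarrow> nat"
  assumes "group G" and "finite (carrier G)"
    and "ng_nimrep G \<alpha> M act" and "ng_nimrep_irreducible G M act"
    and "m \<in> M" and "m' \<in> M" and "g \<in> carrier G"
    and "\<forall>n\<in>M. act (Grp g) m n = (if n = m' then 1 else 0)"
  shows "\<forall>n\<in>M. act Xel m n = act Xel m' n"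
proof
  fix n assume "n \<in> M"
  have "finite M" using assms(3) unfolding ng_nimrep_def by blast
  have "act Xel m n = (\<Sum>k\<in>M. act (Grp g) m k * act Xel k n)"
    using ng_nimrep_act_Xel_eq_sum_Grp[OF assms(2,3,7,5) \<open>n \<in> M\<close>] .
  also have "\<dots> = act Xel m' n"
    using sum_unit_row[OF \<open>finite M\<close> assms(6,8)] .
  finally show "act Xel m n = act Xel m' n" .
qed

end
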